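(* Let $K\subseteq\mathbb{R}^d$ be a convex body and let $\nu$ be a probability measure on $\mathbb{R}^d$ with density $f$ whose support is $K$ and with $\inf_{x\in K} f(x)>0$. There is a constant $c=c(K,\nu)$ such that, for any sequence $(r_n)$ with $r_n \geq c\left(\frac{\ln n}{n}\right)^{1/d}$, the random Vietoris--Rips complex $\mathcal{R}(n,r_n)$ is asymptotically almost surely contractible.
   Context: A convex body is a convex, compact set with nonempty interior. The random Vietoris--Rips complex $\mathcal{R}(n,r)$ is constructed by sampling $X_1,\dots,X_n$ i.i.d. according to $\nu$ and declaring a subset of these points a simplex if and only if all its pairwise Euclidean distances are at most $r$. A simplicial complex is contractible if its geometric realization is homotopy equivalent to a point. A sequence of events $E_n$ holds asymptotically almost surely (a.a.s.) if $\Pr(E_n)\to 1$ as $n\to\infty$. *)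

theory Defs
  imports "HOL-Analysis.Analysis" "HOL-Probability.Probability"
begin

definition convex_body :: "'a::euclidean_space set \<Rightarrow> bool" where
  "convex_body K \<longleftrightarrow> convex K \<and> compact K \<and> interior K \<noteq> {}"

definition vr_simplices :: "nat \<Rightarrow> real \<Rightarrow> (nat \<Rightarrow> 'a::metric_space) \<Rightarrow> nat set set" where
  "vr_simplices n r X =
     {\<sigma>. \<sigma> \<noteq> {} \<and> \<sigma> \<subseteq> {..<n} \<and> (\<forall>i\<in>\<sigma>. \<forall>j\<in>\<sigma>. dist (X i) (X j) \<le> r)}"

text \<open>Standard geometric realization of an abstract simplicial complex with
  vertex set contained in {0..n-1}, as a subset of the space of real sequences
  (product topology; all points live in the finite-dimensional coordinate space
  on {0..n-1}, where this is the Euclidean topology): the points with barycentric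
  coordinates whose support is a simplex.\<close>
definition geom_realization :: "nat \<Rightarrow> nat set set \<Rightarrow> (nat \<Rightarrow> real) set" where
  "geom_realization n S =
     {x. (\<forall>i. 0 \<le> x i) \<and> (\<forall>i. n \<le> i \<longrightarrow> x i = 0) \<and> (\<Sum>i<n. x i) = 1 \<and> {i. 0 < x i} \<in> S}"

definition vr_contractible :: "nat \<Rightarrow> real \<Rightarrow> (nat \<Rightarrow> 'a::metric_space) \<Rightarrow> bool" where
  "vr_contractible n r X \<longleftrightarrow> contractible (geom_realization n (vr_simplices n r X))"

end

theory Submission
  imports Defs "HOL-Real_Asymp.Real_Asymp"
begin

(* A density bounded below on a convex body gives every ball B(y, rho) with centre y in K and
   small radius mass at least kappa * rho^d.  A maximal 2 rho-separated subset Y of K is then a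
   2 rho-net of K with at most 1 / (kappa rho^d) points, and with probability at least
   1 - |Y| (1 - kappa rho^d)^n every ball B(y, rho), y in Y, contains a sample point; the sample is
   then r/5-dense in K as soon as 15 rho <= r.  An r/5-dense sample of a convex set has a
   contractible Vietoris-Rips complex: on its realization the identity is homotopic, along
   straight lines, first to the map keeping only the vertices within 4r/5 of the barycentre (some
   vertex always lies within r / sqrt 2 of it), then to the nerve map of the r/5-balls around the
   sample evaluated at the barycentre, and this map factors through the contractible set K.
   With rho proportional to r >= c (ln n / n)^(1/d) the failure probability is O(1 / (n ln n)). *)

section \<open>Barycentric coordinates on the Vietoris--Rips complex\<close>

definition barycentric :: "nat \<Rightarrow> (nat \<Rightarrow> real) \<Rightarrow> bool" where
  "barycentric n x \<longleftrightarrow> (\<forall>i. 0 \<le> x i) \<and> (\<forall>i. n \<le> i \<longrightarrow> x i = 0) \<and> (\<Sum>i<n. x i) = 1"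

lemma mem_vr_realization_iff:
  "x \<in> geom_realization n (vr_simplices n r X) \<longleftrightarrow>
     barycentric n x \<and> (\<forall>i j. 0 < x i \<longrightarrow> 0 < x j \<longrightarrow> dist (X i) (X j) \<le> r)"
proof
  assume "barycentric n x \<and> (\<forall>i j. 0 < x i \<longrightarrow> 0 < x j \<longrightarrow> dist (X i) (X j) \<le> r)"
  then have x: "barycentric n x" and pw: "\<forall>i j. 0 < x i \<longrightarrow> 0 < x j \<longrightarrow> dist (X i) (X j) \<le> r"
    by auto
  have "{i. 0 < x i} \<noteq> {}"
  proof
    assume "{i. 0 < x i} = {}"
    then have "\<And>i. x i = 0" using x by (metis barycentric_def empty_Collect_eq order_less_le)
    then show False using x by (simp add: barycentric_def)
  qed
  moreover have "{i. 0 < x i} \<subseteq> {..<n}"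
    using x by (auto simp: barycentric_def not_less[symmetric])
  ultimately show "x \<in> geom_realization n (vr_simplices n r X)"
    using x pw by (auto simp: geom_realization_def vr_simplices_def barycentric_def)
qed (auto simp: geom_realization_def vr_simplices_def barycentric_def)

lemma homotopic_in_vr_realization:
  fixes S :: "'b::topological_space set" and p q :: "'b \<Rightarrow> nat \<Rightarrow> real"
  assumes "continuous_on S p" "continuous_on S q"
    and "\<And>x. x \<in> S \<Longrightarrow> barycentric n (p x)" "\<And>x. x \<in> S \<Longrightarrow> barycentric n (q x)"
    and "\<And>x i j. x \<in> S \<Longrightarrow> 0 < p x i \<or> 0 < q x i \<Longrightarrow> 0 < p x j \<or> 0 < q x j \<Longrightarrow>
           dist (X i) (X j) \<le> r"
  shows "homotopic_with_canon (\<lambda>_. True) S (geom_realization n (vr_simplices n r X)) p q"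
proof -
  define h where "h z = (\<lambda>i. (1 - fst z) * p (snd z) i + fst z * q (snd z) i)"
    for z :: "real \<times> 'b"
  have coord: "continuous_on ({0..1} \<times> S) (\<lambda>z. u (snd z) i)"
    if "continuous_on S u" for u :: "'b \<Rightarrow> nat \<Rightarrow> real" and i
    by (rule continuous_on_compose2[OF continuous_on_product_then_coordinatewise[OF that]
          continuous_on_snd]) auto
  have "continuous_on ({0..1} \<times> S) h"
    unfolding h_def
    by (intro continuous_on_coordinatewise_then_product continuous_intros coord assms(1,2))
  moreover have "h z \<in> geom_realization n (vr_simplices n r X)" if zS: "z \<in> {0..1} \<times> S" for z
  proof -
    obtain t x where z: "z = (t, x)" "0 \<le> t" "t \<le> 1" "x \<in> S"
      using zS by (cases z) auto
    have pos: "0 < p x i \<or> 0 < q x i" if "0 < (1 - t) * p x i + t * q x i" for i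
      using that z(2,3) assms(3,4)[OF z(4)] unfolding barycentric_def
      by (metis add.right_neutral linorder_not_le mult_zero_right nle_le)
    have "barycentric n (h z)"
      using z assms(3,4)[OF z(4)]
      by (auto simp: h_def barycentric_def sum.distrib sum_distrib_left[symmetric])
    then show ?thesis
      using assms(5)[OF z(4)] pos by (auto simp: mem_vr_realization_iff h_def z(1))
  qed
  ultimately show ?thesis
    by (auto simp: homotopic_with h_def intro!: exI[of _ h])
qed

lemma weighted_pairwise_sq_dist:
  fixes X :: "'i \<Rightarrow> 'a::real_inner"
  assumes "finite I" "sum w I = 1"
  defines "m \<equiv> \<Sum>k\<in>I. w k *\<^sub>R X k"
  shows "(\<Sum>k\<in>I. \<Sum>i\<in>I. w k * w i * (dist (X i) (X k))\<^sup>2) = 2 * (\<Sum>i\<in>I. w i * (dist (X i) m)\<^sup>2)"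
proof -
  define V where "V = (\<Sum>i\<in>I. w i * (dist (X i) m)\<^sup>2)"
  have centred: "(\<Sum>i\<in>I. w i * ((X i - m) \<bullet> v)) = 0" for v
  proof -
    have "(\<Sum>i\<in>I. w i *\<^sub>R (X i - m)) = 0"
      using assms(2) by (simp add: m_def scaleR_diff_right sum_subtractf scaleR_sum_left[symmetric])
    moreover have "(\<Sum>i\<in>I. w i * ((X i - m) \<bullet> v)) = (\<Sum>i\<in>I. w i *\<^sub>R (X i - m)) \<bullet> v"
      by (simp add: inner_sum_left)
    ultimately show ?thesis by simp
  qed
  have expand: "(dist (X i) (X k))\<^sup>2 = (dist (X i) m)\<^sup>2 + 2 * ((X i - m) \<bullet> (m - X k)) + (dist (X k) m)\<^sup>2"
    for i k
  proof -
    have "X i - X k = (X i - m) + (m - X k)" by simp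
    then show ?thesis
      by (simp add: dist_norm power2_norm_eq_inner inner_add_left inner_add_right
          inner_commute norm_minus_commute[of "X k"] algebra_simps)
  qed
  have "(\<Sum>i\<in>I. w i * (dist (X i) (X k))\<^sup>2) = V + (dist (X k) m)\<^sup>2" for k
  proof -
    have "(\<Sum>i\<in>I. w i * (dist (X i) (X k))\<^sup>2) =
        (\<Sum>i\<in>I. w i * (dist (X i) m)\<^sup>2 + 2 * (w i * ((X i - m) \<bullet> (m - X k))) + w i * (dist (X k) m)\<^sup>2)"
      by (intro sum.cong) (simp_all add: expand algebra_simps)
    also have "\<dots> = V + 2 * (\<Sum>i\<in>I. w i * ((X i - m) \<bullet> (m - X k))) + sum w I * (dist (X k) m)\<^sup>2"
      by (simp add: V_def sum.distrib sum_distrib_left sum_distrib_right)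
    finally show ?thesis using centred assms(2) by simp
  qed
  then have "(\<Sum>k\<in>I. \<Sum>i\<in>I. w k * w i * (dist (X i) (X k))\<^sup>2) = (\<Sum>k\<in>I. w k * V + w k * (dist (X k) m)\<^sup>2)"
    by (simp add: mult.assoc sum_distrib_left[symmetric] distrib_left)
  also have "\<dots> = 2 * V"
    using assms(2) by (simp add: sum.distrib sum_distrib_right[symmetric] V_def)
  finally show ?thesis by (simp add: V_def)
qed

lemma weighted_centroid_close_to_support:
  fixes X :: "'i \<Rightarrow> 'a::real_inner"
  assumes "finite I" "\<And>i. i \<in> I \<Longrightarrow> 0 \<le> w i" "sum w I = 1"
    and "\<And>i j. i \<in> I \<Longrightarrow> j \<in> I \<Longrightarrow> 0 < w i \<Longrightarrow> 0 < w j \<Longrightarrow> dist (X i) (X j) \<le> r"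
  shows "\<exists>i\<in>I. 0 < w i \<and> 2 * (dist (X i) (\<Sum>k\<in>I. w k *\<^sub>R X k))\<^sup>2 \<le> r\<^sup>2"
proof (rule ccontr)
  define m where "m = (\<Sum>k\<in>I. w k *\<^sub>R X k)"
  define V where "V = (\<Sum>i\<in>I. w i * (dist (X i) m)\<^sup>2)"
  assume "\<not> ?thesis"
  then have far: "r\<^sup>2 < 2 * (dist (X i) m)\<^sup>2" if "i \<in> I" "0 < w i" for i
    using that by (auto simp: m_def not_le)
  have "(\<Sum>k\<in>I. \<Sum>i\<in>I. w k * w i * (dist (X i) (X k))\<^sup>2) \<le> (\<Sum>k\<in>I. \<Sum>i\<in>I. w k * w i * r\<^sup>2)"
  proof (intro sum_mono)
    fix k i assume "k \<in> I" "i \<in> I"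
    then have "w i = 0 \<or> w k = 0 \<or> dist (X i) (X k) \<le> r"
      using assms(2,4) by (metis order_le_neq_trans)
    then show "w k * w i * (dist (X i) (X k))\<^sup>2 \<le> w k * w i * r\<^sup>2"
      using assms(2) \<open>k \<in> I\<close> \<open>i \<in> I\<close> by (elim disjE) (auto intro!: mult_left_mono power_mono)
  qed
  also have "\<dots> = r\<^sup>2"
    using assms(3) by (simp add: sum_distrib_left[symmetric] sum_distrib_right[symmetric])
  finally have "2 * V \<le> r\<^sup>2"
    using weighted_pairwise_sq_dist[OF assms(1,3), where X = X] by (simp add: V_def m_def)
  moreover have "r\<^sup>2 < 2 * V"
  proof -
    obtain j where "j \<in> I" "0 < w j"
      using assms(2,3) by (metis order_less_le sum.neutral zero_neq_one)
    moreover have "w i * r\<^sup>2 \<le> w i * (2 * (dist (X i) m)\<^sup>2)" if "i \<in> I" for i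
      using far[OF that] assms(2)[OF that] by (cases "w i = 0") (auto simp: less_le)
    ultimately have "(\<Sum>i\<in>I. w i * r\<^sup>2) < (\<Sum>i\<in>I. w i * (2 * (dist (X i) m)\<^sup>2))"
      using far by (intro sum_strict_mono_ex1[OF assms(1)] bexI[of _ j]) auto
    then show ?thesis
      using assms(3) by (simp add: V_def sum_distrib_right[symmetric] sum_distrib_left mult.left_commute)
  qed
  ultimately show False by simp
qed

section \<open>Dense samples of convex sets\<close>

definition normalize_weights :: "nat \<Rightarrow> (nat \<Rightarrow> real) \<Rightarrow> nat \<Rightarrow> real" where
  "normalize_weights n u i = (if i < n then u i / (\<Sum>j<n. u j) else 0)"

lemma
  assumes "\<And>i. i < n \<Longrightarrow> 0 \<le> u i" "\<exists>i<n. 0 < u i"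
  shows barycentric_normalize_weights: "barycentric n (normalize_weights n u)"
    and normalize_weights_pos_iff: "0 < normalize_weights n u i \<longleftrightarrow> i < n \<and> 0 < u i"
proof -
  have "0 < (\<Sum>j<n. u j)"
    using assms by (metis finite_lessThan lessThan_iff sum_pos2)
  then show "barycentric n (normalize_weights n u)" "0 < normalize_weights n u i \<longleftrightarrow> i < n \<and> 0 < u i"
    using assms(1)
    by (auto simp: barycentric_def normalize_weights_def sum_divide_distrib[symmetric]
        zero_less_divide_iff)
qed

lemma continuous_on_normalize_weights:
  assumes "\<And>i. i < n \<Longrightarrow> continuous_on S (\<lambda>x. u x i)"
    and "\<And>x i. x \<in> S \<Longrightarrow> i < n \<Longrightarrow> 0 \<le> u x i" "\<And>x. x \<in> S \<Longrightarrow> \<exists>i<n. 0 < u x i"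
  shows "continuous_on S (\<lambda>x. normalize_weights n (u x))"
proof (rule continuous_on_coordinatewise_then_product)
  fix i
  have "(\<Sum>j<n. u x j) \<noteq> 0" if "x \<in> S" for x
    using assms(2,3)[OF that] by (metis finite_lessThan lessThan_iff sum_pos2 order_less_irrefl)
  then show "continuous_on S (\<lambda>x. normalize_weights n (u x) i)"
    using assms(1) by (cases "i < n") (auto simp: normalize_weights_def intro!: continuous_intros)
qed

definition vr_barycentre :: "nat \<Rightarrow> (nat \<Rightarrow> 'a::real_vector) \<Rightarrow> (nat \<Rightarrow> real) \<Rightarrow> 'a" where
  "vr_barycentre n X x = (\<Sum>k<n. x k *\<^sub>R X k)"

lemma continuous_on_vr_barycentre:
  fixes X :: "nat \<Rightarrow> 'a::real_normed_vector"
  shows "continuous_on A (vr_barycentre n X)"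
  unfolding vr_barycentre_def
  by (intro continuous_intros continuous_on_product_then_coordinatewise[OF continuous_on_id])

lemma vr_barycentre_in_convex:
  assumes "convex C" "\<And>j. j < n \<Longrightarrow> X j \<in> C" "barycentric n x"
  shows "vr_barycentre n X x \<in> C"
  using assms unfolding vr_barycentre_def barycentric_def
  by (intro convex_sum[OF _ assms(1)]) auto

definition nerve_map :: "nat \<Rightarrow> (nat \<Rightarrow> 'a::metric_space) \<Rightarrow> real \<Rightarrow> 'a \<Rightarrow> nat \<Rightarrow> real" where
  "nerve_map n X e z = normalize_weights n (\<lambda>j. max 0 (e - dist z (X j)))"

context
  fixes C :: "'a::metric_space set" and X :: "nat \<Rightarrow> 'a" and n :: nat and e :: real
  assumes cover: "\<forall>z\<in>C. \<exists>j<n. dist z (X j) < e"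
begin

lemma nerve_map_weights: "z \<in> C \<Longrightarrow> \<exists>j<n. 0 < max 0 (e - dist z (X j))"
  using cover by fastforce

lemma barycentric_nerve_map: "z \<in> C \<Longrightarrow> barycentric n (nerve_map n X e z)"
  unfolding nerve_map_def by (rule barycentric_normalize_weights[OF _ nerve_map_weights]) simp_all

lemma nerve_map_pos_imp:
  assumes "z \<in> C" "0 < nerve_map n X e z j"
  shows "j < n \<and> dist z (X j) < e"
  using assms(2) normalize_weights_pos_iff[OF _ nerve_map_weights[OF assms(1)], of j]
  by (auto simp: nerve_map_def less_max_iff_disj)

lemma continuous_on_nerve_map: "continuous_on C (nerve_map n X e)"
  unfolding nerve_map_def
  by (intro continuous_on_normalize_weights continuous_intros nerve_map_weights) auto

lemma nerve_map_in_vr_realization: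
  assumes "z \<in> C" "2 * e \<le> r"
  shows "nerve_map n X e z \<in> geom_realization n (vr_simplices n r X)"
proof -
  have "dist (X i) (X j) \<le> r" if "0 < nerve_map n X e z i" "0 < nerve_map n X e z j" for i j
    using nerve_map_pos_imp[OF assms(1) that(1)] nerve_map_pos_imp[OF assms(1) that(2)]
      dist_triangle3[of "X i" "X j" z] assms(2) by linarith
  then show ?thesis
    using barycentric_nerve_map[OF assms(1)] by (simp add: mem_vr_realization_iff)
qed

end

definition vr_shrink :: "nat \<Rightarrow> (nat \<Rightarrow> 'a::real_normed_vector) \<Rightarrow> real \<Rightarrow> (nat \<Rightarrow> real) \<Rightarrow> nat \<Rightarrow> real"
  where "vr_shrink n X s x =
    normalize_weights n (\<lambda>i. x i * max 0 (s - dist (vr_barycentre n X x) (X i)))"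

text \<open>The hypothesis r^2 < 2 s^2 leaves every simplex a vertex within distance s of its
  barycentre (weighted_centroid_close_to_support), so vr_shrink never normalises the zero vector.\<close>

context
  fixes X :: "nat \<Rightarrow> 'a::real_inner" and n :: nat and r s :: real
  assumes s: "0 < s" "r\<^sup>2 < 2 * s\<^sup>2"
begin

lemma vr_shrink_weights:
  assumes "x \<in> geom_realization n (vr_simplices n r X)"
  shows "\<exists>i<n. 0 < x i * max 0 (s - dist (vr_barycentre n X x) (X i))"
proof -
  obtain i where i: "i < n" "0 < x i" "2 * (dist (X i) (vr_barycentre n X x))\<^sup>2 \<le> r\<^sup>2"
    using weighted_centroid_close_to_support[of "{..<n}" x X r] assms
    by (auto simp: mem_vr_realization_iff barycentric_def vr_barycentre_def)
  have "dist (X i) (vr_barycentre n X x) < s"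
  proof (rule ccontr)
    assume "\<not> ?thesis"
    then have "s\<^sup>2 \<le> (dist (X i) (vr_barycentre n X x))\<^sup>2"
      using s(1) by (intro power_mono) auto
    then show False using i(3) s(2) by linarith
  qed
  then show ?thesis using i by (auto simp: dist_commute)
qed

lemma barycentric_vr_shrink:
  assumes "x \<in> geom_realization n (vr_simplices n r X)"
  shows "barycentric n (vr_shrink n X s x)"
  unfolding vr_shrink_def using assms
  by (intro barycentric_normalize_weights[OF _ vr_shrink_weights[OF assms]])
     (simp add: mem_vr_realization_iff barycentric_def)

lemma vr_shrink_pos_imp:
  assumes "x \<in> geom_realization n (vr_simplices n r X)" "0 < vr_shrink n X s x i"
  shows "0 < x i \<and> dist (vr_barycentre n X x) (X i) < s"
proof -
  have x: "barycentric n x" using assms(1) by (simp add: mem_vr_realization_iff)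
  have "0 < x i * max 0 (s - dist (vr_barycentre n X x) (X i))"
    using assms(2) x normalize_weights_pos_iff[OF _ vr_shrink_weights[OF assms(1)], of i]
    by (simp add: vr_shrink_def barycentric_def)
  then show ?thesis
    using x by (auto simp: barycentric_def zero_less_mult_iff)
qed

lemma continuous_on_vr_shrink:
  "continuous_on (geom_realization n (vr_simplices n r X)) (vr_shrink n X s)"
  unfolding vr_shrink_def
  by (intro continuous_on_normalize_weights continuous_intros continuous_on_vr_barycentre
      continuous_on_product_then_coordinatewise[OF continuous_on_id] vr_shrink_weights)
     (auto simp: mem_vr_realization_iff barycentric_def)

lemma homotopic_id_vr_shrink:
  "homotopic_with_canon (\<lambda>_. True) (geom_realization n (vr_simplices n r X))
     (geom_realization n (vr_simplices n r X)) id (vr_shrink n X s)"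
proof (rule homotopic_in_vr_realization)
  fix x i j
  assume x: "x \<in> geom_realization n (vr_simplices n r X)"
    and ij: "0 < id x i \<or> 0 < vr_shrink n X s x i" "0 < id x j \<or> 0 < vr_shrink n X s x j"
  have "0 < x k" if "0 < id x k \<or> 0 < vr_shrink n X s x k" for k
    using that vr_shrink_pos_imp[OF x, of k] unfolding id_def by blast
  then show "dist (X i) (X j) \<le> r"
    using ij x[unfolded mem_vr_realization_iff] by blast
next
  show "barycentric n (id x)" if "x \<in> geom_realization n (vr_simplices n r X)" for x
    using that by (simp add: mem_vr_realization_iff)
qed (simp_all add: continuous_on_vr_shrink barycentric_vr_shrink)

end

lemma homotopic_vr_shrink_nerve_map:
  fixes X :: "nat \<Rightarrow> 'a::real_inner"
  assumes s: "0 < s" "r\<^sup>2 < 2 * s\<^sup>2" and "e \<le> s" "s + e \<le> r"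
    and bC: "\<And>x. x \<in> geom_realization n (vr_simplices n r X) \<Longrightarrow> vr_barycentre n X x \<in> C"
    and cover: "\<forall>z\<in>C. \<exists>j<n. dist z (X j) < e"
  defines "S \<equiv> geom_realization n (vr_simplices n r X)"
  shows "homotopic_with_canon (\<lambda>_. True) S S (vr_shrink n X s) (nerve_map n X e \<circ> vr_barycentre n X)"
proof (rule homotopic_in_vr_realization[where n = n and r = r and X = X, folded S_def])
  show "continuous_on S (vr_shrink n X s)"
    unfolding S_def by (rule continuous_on_vr_shrink[OF s])
  show "continuous_on S (nerve_map n X e \<circ> vr_barycentre n X)"
    using bC unfolding S_def
    by (intro continuous_on_compose continuous_on_vr_barycentre
        continuous_on_subset[OF continuous_on_nerve_map[OF cover]]) auto
  show "barycentric n (vr_shrink n X s x)" if "x \<in> S" for x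
    using that unfolding S_def by (rule barycentric_vr_shrink[OF s])
  show "barycentric n ((nerve_map n X e \<circ> vr_barycentre n X) x)" if "x \<in> S" for x
    using that unfolding S_def comp_def by (intro barycentric_nerve_map[OF cover] bC)
  fix x i j
  let ?b = "vr_barycentre n X x" and ?g = "nerve_map n X e \<circ> vr_barycentre n X"
  assume "x \<in> S" and ij: "0 < vr_shrink n X s x i \<or> 0 < ?g x i" "0 < vr_shrink n X s x j \<or> 0 < ?g x j"
  then have x: "x \<in> geom_realization n (vr_simplices n r X)" by (simp add: S_def)
  note shrink_pos = vr_shrink_pos_imp[OF s x] and nerve_pos = nerve_map_pos_imp[OF cover bC[OF x]]
  have near: "dist ?b (X k) < s" if "0 < vr_shrink n X s x k \<or> 0 < ?g x k" for k
    using that shrink_pos[of k] nerve_pos[of k] \<open>e \<le> s\<close> by auto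
  show "dist (X i) (X j) \<le> r"
  proof (cases "0 < vr_shrink n X s x i \<and> 0 < vr_shrink n X s x j")
    case True
    then show ?thesis
      using x shrink_pos by (auto simp: mem_vr_realization_iff)
  next
    case False
    then have "dist ?b (X i) < e \<or> dist ?b (X j) < e"
      using ij nerve_pos by auto
    then show ?thesis
      using near[OF ij(1)] near[OF ij(2)] dist_triangle3[of "X i" "X j" ?b] \<open>s + e \<le> r\<close> by linarith
  qed
qed

lemma vr_contractible_if_dense_in_convex:
  fixes X :: "nat \<Rightarrow> 'a::real_inner"
  assumes "convex C" "\<And>j. j < n \<Longrightarrow> X j \<in> C" "0 < r"
    and dense: "\<forall>z\<in>C. \<exists>j<n. dist z (X j) < r/5"
  shows "vr_contractible n r X"
proof -
  define S where "S = geom_realization n (vr_simplices n r X)"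
  have s: "0 < 4*r/5" "r\<^sup>2 < 2 * (4*r/5)\<^sup>2"
    using \<open>0 < r\<close> by (auto simp: power2_eq_square)
  have bC: "vr_barycentre n X \<in> S \<rightarrow> C"
  proof
    fix x assume "x \<in> S"
    then have "barycentric n x" by (simp add: S_def mem_vr_realization_iff)
    then show "vr_barycentre n X x \<in> C" using assms(1,2) by (intro vr_barycentre_in_convex)
  qed
  have gS: "nerve_map n X (r/5) \<in> C \<rightarrow> S"
    using nerve_map_in_vr_realization[OF dense] \<open>0 < r\<close> by (simp add: S_def)
  have "homotopic_with_canon (\<lambda>_. True) S S id (vr_shrink n X (4*r/5))"
    unfolding S_def by (rule homotopic_id_vr_shrink[OF s])
  moreover have "homotopic_with_canon (\<lambda>_. True) S S (vr_shrink n X (4*r/5))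
      (nerve_map n X (r/5) \<circ> vr_barycentre n X)"
    unfolding S_def
  proof (rule homotopic_vr_shrink_nerve_map[OF s _ _ _ dense])
    show "vr_barycentre n X x \<in> C" if "x \<in> geom_realization n (vr_simplices n r X)" for x
      using bC that by (auto simp: S_def)
  qed (use \<open>0 < r\<close> in simp_all)
  moreover obtain c where "homotopic_with_canon (\<lambda>_. True) S S
      (nerve_map n X (r/5) \<circ> vr_barycentre n X) (\<lambda>_. c)"
    using nullhomotopic_through_contractible[OF continuous_on_vr_barycentre bC
        continuous_on_nerve_map[OF dense] gS convex_imp_contractible[OF assms(1)]] by blast
  ultimately show ?thesis
    unfolding vr_contractible_def contractible_def S_def[symmetric]
    by (metis homotopic_with_trans)
qed

section \<open>Mass of small balls and finite nets\<close>

lemma convex_shrunk_ball_subset: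
  fixes K :: "'a::real_normed_vector set"
  assumes "convex K" "ball x0 R \<subseteq> K" "y \<in> K" "0 < t" "t \<le> 1"
  shows "ball (y + t *\<^sub>R (x0 - y)) (t * R) \<subseteq> K"
proof
  fix z assume "z \<in> ball (y + t *\<^sub>R (x0 - y)) (t * R)"
  then have zc: "norm (z - (y + t *\<^sub>R (x0 - y))) < t * R"
    by (simp add: dist_norm norm_minus_commute)
  define z' where "z' = x0 + (1/t) *\<^sub>R (z - (y + t *\<^sub>R (x0 - y)))"
  have "dist x0 z' = (1/t) * norm (z - (y + t *\<^sub>R (x0 - y)))"
    using \<open>0 < t\<close> by (simp add: z'_def dist_norm)
  also have "\<dots> < R" using zc \<open>0 < t\<close> by (simp add: field_simps)
  finally have "z' \<in> K" using assms(2) by auto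
  moreover have "z = (1 - t) *\<^sub>R y + t *\<^sub>R z'"
    using \<open>0 < t\<close> by (simp add: z'_def algebra_simps)
  ultimately show "z \<in> K"
    using assms(1,3,4,5) unfolding convex_alt by auto
qed

lemma convex_body_contains_proportional_balls:
  fixes K :: "'a::real_normed_vector set"
  assumes "convex K" "bounded K" "interior K \<noteq> {}"
  obtains a \<rho>0 where "0 < a" "0 < \<rho>0"
    "\<And>y \<rho>. y \<in> K \<Longrightarrow> 0 < \<rho> \<Longrightarrow> \<rho> \<le> \<rho>0 \<Longrightarrow> \<exists>c. ball c (a * \<rho>) \<subseteq> K \<inter> ball y \<rho>"
proof -
  obtain x0 where "x0 \<in> interior K" using assms(3) by auto
  then obtain R where R: "0 < R" "ball x0 R \<subseteq> K" using mem_interior by blast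
  obtain D where D: "0 \<le> D" "\<And>y. y \<in> K \<Longrightarrow> dist x0 y \<le> D"
    using assms(2) bounded_any_center[of K x0] by (metis dist_not_less_zero linorder_linear order_trans)
  have "\<exists>c. ball c (R / (R + D) * \<rho>) \<subseteq> K \<inter> ball y \<rho>"
    if y: "y \<in> K" and \<rho>: "0 < \<rho>" "\<rho> \<le> R + D" for y \<rho>
  proof (intro exI conjI)
    define t where "t = \<rho> / (R + D)"
    have t: "0 < t" "t \<le> 1" using \<rho> R D by (auto simp: t_def)
    have radius: "R / (R + D) * \<rho> = t * R" by (simp add: t_def)
    have "ball (y + t *\<^sub>R (x0 - y)) (t * R) \<subseteq> ball y \<rho>"
    proof
      fix z assume "z \<in> ball (y + t *\<^sub>R (x0 - y)) (t * R)"
      moreover have "dist y (y + t *\<^sub>R (x0 - y)) \<le> t * D"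
        using D(2)[OF y] t by (simp add: dist_norm norm_minus_commute mult_left_mono)
      ultimately have "dist y z < t * (R + D)"
        using dist_triangle[of y z "y + t *\<^sub>R (x0 - y)"] by (simp add: algebra_simps)
      then show "z \<in> ball y \<rho>" using R D by (simp add: t_def)
    qed
    then show "ball (y + t *\<^sub>R (x0 - y)) (R / (R + D) * \<rho>) \<subseteq> K \<inter> ball y \<rho>"
      using convex_shrunk_ball_subset[OF assms(1) R(2) y t] radius by simp
  qed
  then show ?thesis
    using that[of "R / (R + D)" "R + D"] R D by simp
qed

lemma density_ball_measure_lower_bound:
  fixes K :: "'a::euclidean_space set" and f :: "'a \<Rightarrow> real"
  assumes "convex_body K" "f \<in> borel_measurable borel" "0 < \<delta>" "\<And>x. x \<in> K \<Longrightarrow> \<delta> \<le> f x"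
    and \<nu>: "\<nu> = density lborel (\<lambda>x. ennreal (f x))" "prob_space \<nu>"
  obtains \<kappa> \<rho>0 where "0 < \<kappa>" "0 < \<rho>0"
    "\<And>y \<rho>. y \<in> K \<Longrightarrow> 0 < \<rho> \<Longrightarrow> \<rho> \<le> \<rho>0 \<Longrightarrow> \<kappa> * \<rho> ^ DIM('a) \<le> measure \<nu> (ball y \<rho>)"
proof -
  obtain a \<rho>0 where a: "0 < a" "0 < \<rho>0"
    and balls: "\<And>y \<rho>. y \<in> K \<Longrightarrow> 0 < \<rho> \<Longrightarrow> \<rho> \<le> \<rho>0 \<Longrightarrow> \<exists>c. ball c (a * \<rho>) \<subseteq> K \<inter> ball y \<rho>"
    using convex_body_contains_proportional_balls[of K] assms(1)
    by (auto simp: convex_body_def compact_imp_bounded)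
  define \<kappa> where "\<kappa> = \<delta> * a ^ DIM('a) * measure lborel (ball (0::'a) 1)"
  have "\<kappa> * \<rho> ^ DIM('a) \<le> measure \<nu> (ball y \<rho>)" if y\<rho>: "y \<in> K" "0 < \<rho>" "\<rho> \<le> \<rho>0" for y \<rho>
  proof -
    obtain c where c: "ball c (a * \<rho>) \<subseteq> K \<inter> ball y \<rho>" using balls[OF y\<rho>] by blast
    have "ennreal \<delta> * emeasure lborel (ball c (a * \<rho>)) = (\<integral>\<^sup>+x. ennreal \<delta> * indicator (ball c (a * \<rho>)) x \<partial>lborel)"
      by (simp add: nn_integral_cmult_indicator)
    also have "\<dots> \<le> (\<integral>\<^sup>+x. ennreal (f x) * indicator (ball y \<rho>) x \<partial>lborel)"
      using c assms(4) by (intro nn_integral_mono) (auto simp: indicator_def intro!: ennreal_leI)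
    also have "\<dots> = emeasure \<nu> (ball y \<rho>)"
      unfolding \<nu>(1) using assms(2) by (simp add: emeasure_density)
    finally have "ennreal (\<delta> * measure lborel (ball c (a * \<rho>))) \<le> ennreal (measure \<nu> (ball y \<rho>))"
      using finite_measure.emeasure_eq_measure[OF prob_space.axioms(1)[OF \<nu>(2)]] assms(3)
        emeasure_lborel_ball_finite[of c "a * \<rho>"]
      by (simp add: emeasure_eq_ennreal_measure ennreal_mult)
    moreover have "measure lborel (ball c (a * \<rho>)) = (a * \<rho>) ^ DIM('a) * measure lborel (ball (0::'a) 1)"
      using a y\<rho> by (intro content_ball_conv_unit_ball) simp
    ultimately show ?thesis
      using measure_nonneg[of \<nu>] by (simp add: \<kappa>_def power_mult_distrib ennreal_le_iff mult_ac)
  qed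
  moreover have "0 < \<kappa>"
    using assms(3) a content_ball_pos[of 1 "0::'a"] by (simp add: \<kappa>_def)
  ultimately show ?thesis using that a(2) by blast
qed

lemma measure_density_support_eq_1:
  assumes "f \<in> borel_measurable borel" "\<And>x. x \<notin> K \<Longrightarrow> f x = 0" "K \<in> sets borel"
    and \<nu>: "\<nu> = density lborel (\<lambda>x. ennreal (f x))" "prob_space \<nu>"
  shows "measure \<nu> K = 1"
proof -
  have "emeasure \<nu> K = (\<integral>\<^sup>+x. ennreal (f x) * indicator K x \<partial>lborel)"
    unfolding \<nu>(1) using assms(1,3) by (simp add: emeasure_density)
  also have "\<dots> = (\<integral>\<^sup>+x. ennreal (f x) * indicator UNIV x \<partial>lborel)"
    using assms(2) by (intro nn_integral_cong) (auto simp: indicator_def)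
  also have "\<dots> = emeasure \<nu> (space \<nu>)"
    unfolding \<nu>(1) using assms(1) by (simp add: emeasure_density)
  finally show ?thesis
    using prob_space.emeasure_space_1[OF \<nu>(2)] by (simp add: measure_def)
qed

lemma card_separated_mult_ball_mass_le_1:
  fixes T :: "'a::metric_space set"
  assumes "prob_space \<nu>" "sets \<nu> = sets borel" "finite T"
    and "\<And>a b. a \<in> T \<Longrightarrow> b \<in> T \<Longrightarrow> a \<noteq> b \<Longrightarrow> 2 * \<rho> \<le> dist a b"
    and "\<And>a. a \<in> T \<Longrightarrow> q \<le> measure \<nu> (ball a \<rho>)"
  shows "real (card T) * q \<le> 1"
proof -
  interpret prob_space \<nu> by fact
  have disjoint: "disjoint_family_on (\<lambda>a. ball a \<rho>) T"
    unfolding disjoint_family_on_def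
  proof (intro ballI impI equals0I)
    fix a b z assume ab: "a \<in> T" "b \<in> T" "a \<noteq> b" and "z \<in> ball a \<rho> \<inter> ball b \<rho>"
    then have "dist a z < \<rho>" "dist b z < \<rho>" by auto
    then show False
      using assms(4)[OF ab] dist_triangle2[of a b z] by linarith
  qed
  have "real (card T) * q = (\<Sum>a\<in>T. q)" by simp
  also have "\<dots> \<le> (\<Sum>a\<in>T. measure \<nu> (ball a \<rho>))" by (rule sum_mono) (rule assms(5))
  also have "\<dots> = measure \<nu> (\<Union>a\<in>T. ball a \<rho>)"
    using assms(2)
    by (intro finite_measure_finite_Union[symmetric] assms(3) disjoint)
       (simp add: image_subset_iff borel_open)
  also have "\<dots> \<le> 1" by (rule prob_le_1)
  finally show ?thesis .
qed

lemma finite_net_from_ball_mass: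
  fixes K :: "'a::metric_space set"
  assumes "prob_space \<nu>" "sets \<nu> = sets borel" "0 < q"
    and "\<And>y. y \<in> K \<Longrightarrow> q \<le> measure \<nu> (ball y \<rho>)"
  obtains Y where "finite Y" "Y \<subseteq> K" "real (card Y) * q \<le> 1"
    "\<And>z. z \<in> K \<Longrightarrow> \<exists>y\<in>Y. dist z y < 2 * \<rho>"
proof -
  define separated where "separated T \<longleftrightarrow>
    finite T \<and> T \<subseteq> K \<and> (\<forall>a\<in>T. \<forall>b\<in>T. a \<noteq> b \<longrightarrow> 2 * \<rho> \<le> dist a b)" for T
  have card_le: "real (card T) * q \<le> 1" if "separated T" for T
    using that assms by (intro card_separated_mult_ball_mass_le_1[of \<nu> T \<rho>]) (auto simp: separated_def)
  have "card T \<le> nat \<lceil>1/q\<rceil>" if "separated T" for T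
  proof -
    have "real (card T) \<le> 1/q" using card_le[OF that] assms(3) by (simp add: field_simps)
    then show ?thesis by linarith
  qed
  then have "card ` {T. separated T} \<subseteq> {..nat \<lceil>1/q\<rceil>}" by auto
  then have fin: "finite (card ` {T. separated T})" by (rule finite_subset) simp
  have "separated {}" by (simp add: separated_def)
  then have "Max (card ` {T. separated T}) \<in> card ` {T. separated T}"
    by (intro Max_in[OF fin]) auto
  then obtain Y where Y_max: "Max (card ` {T. separated T}) = card Y" and Y: "separated Y"
    by (auto elim!: imageE)
  have max: "card T \<le> card Y" if "separated T" for T
    unfolding Y_max[symmetric] by (intro Max_ge[OF fin] imageI CollectI that)
  have net: "\<exists>y\<in>Y. dist z y < 2 * \<rho>" if "z \<in> K" for z
  proof (rule ccontr)
    assume far: "\<not> ?thesis"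
    have "0 < \<rho>"
    proof (rule ccontr)
      assume "\<not> 0 < \<rho>"
      then have "ball z \<rho> = {}" by simp
      then have "measure \<nu> (ball z \<rho>) = 0" by (metis measure_empty)
      then show False using assms(3) assms(4)[OF that] by linarith
    qed
    then have "z \<notin> Y" using far by force
    have "separated (insert z Y)"
      using Y far that by (auto simp: separated_def dist_commute not_less)
    then have "card (insert z Y) \<le> card Y" by (rule max)
    then show False using \<open>z \<notin> Y\<close> Y by (simp add: separated_def)
  qed
  show ?thesis
    by (rule that[OF _ _ card_le[OF Y] net]) (use Y in \<open>simp_all add: separated_def\<close>)
qed

section \<open>Probability of a dense sample\<close>

lemma borel_measurable_PiM_component:
  assumes "sets \<nu> = sets borel"
  shows "(\<lambda>X. X i) \<in> borel_measurable (PiM I (\<lambda>_. \<nu>))"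
proof (cases "i \<in> I")
  case True
  then have "(\<lambda>X. X i) \<in> measurable (PiM I (\<lambda>_. \<nu>)) \<nu>"
    by (intro measurable_component_singleton)
  then show ?thesis using assms measurable_cong_sets by blast
next
  case False
  then show ?thesis
    by (subst measurable_cong[where g = "\<lambda>_. undefined"]) (auto simp: space_PiM PiE_def extensional_def)
qed

lemma sets_vr_contractible_event:
  fixes \<nu> :: "'a::{metric_space, second_countable_topology} measure"
  assumes "sets \<nu> = sets borel"
  shows "{X \<in> space (PiM {..<n} (\<lambda>_. \<nu>)). vr_contractible n r X} \<in> sets (PiM {..<n} (\<lambda>_. \<nu>))"
proof -
  define M where "M = PiM {..<n} (\<lambda>_. \<nu>)"
  define close where "close X = {(i, j). i < n \<and> j < n \<and> dist (X i) (X j) \<le> r}" for X :: "nat \<Rightarrow> 'a"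
  define Q where "Q E \<longleftrightarrow> contractible (geom_realization n {\<sigma>. \<sigma> \<noteq> {} \<and> \<sigma> \<subseteq> {..<n} \<and> \<sigma> \<times> \<sigma> \<subseteq> E})"
    for E
  have "vr_simplices n r X = {\<sigma>. \<sigma> \<noteq> {} \<and> \<sigma> \<subseteq> {..<n} \<and> \<sigma> \<times> \<sigma> \<subseteq> close X}" for X
    unfolding vr_simplices_def close_def by auto
  then have "{X \<in> space M. vr_contractible n r X} =
      (\<Union>E\<in>{E \<in> Pow ({..<n} \<times> {..<n}). Q E}. {X \<in> space M. close X = E})"
    by (auto simp: vr_contractible_def Q_def close_def)
  moreover have "{X \<in> space M. close X = E} \<in> sets M" if "E \<subseteq> {..<n} \<times> {..<n}" for E
  proof -
    have [measurable]: "(\<lambda>X. dist (X i) (X j)) \<in> borel_measurable M" for i j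
      unfolding M_def by (intro borel_measurable_dist borel_measurable_PiM_component assms)
    have "{X \<in> space M. close X = E} =
        {X \<in> space M. \<forall>i\<in>{..<n}. \<forall>j\<in>{..<n}. ((i, j) \<in> E) = (dist (X i) (X j) \<le> r)}"
      using that unfolding close_def by auto
    also have "\<dots> \<in> sets M" by measurable
    finally show ?thesis .
  qed
  ultimately show ?thesis
    unfolding M_def[symmetric] by (auto intro!: sets.finite_UN)
qed

lemma measure_PiM_iid_Collect:
  assumes "prob_space \<nu>" "J \<subseteq> I" "finite J" "\<And>i. i \<in> J \<Longrightarrow> A i \<in> sets \<nu>"
  shows "measure (PiM I (\<lambda>_. \<nu>)) {X \<in> space (PiM I (\<lambda>_. \<nu>)). \<forall>i\<in>J. X i \<in> A i}
       = (\<Prod>i\<in>J. measure \<nu> (A i))"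
proof -
  interpret product_prob_space "\<lambda>_. \<nu>" I
    by (rule product_prob_spaceI) (rule assms(1))
  show ?thesis
    using emeasure_PiM_Collect[OF assms(2-4)]
    unfolding emeasure_eq_measure M.emeasure_eq_measure
    by (simp add: prod_ennreal measure_nonneg prod_nonneg)
qed

lemma measure_PiM_iid_avoid_le_exp:
  assumes "prob_space \<nu>" "A \<in> sets \<nu>" "q \<le> measure \<nu> A"
  shows "measure (PiM {..<n} (\<lambda>_. \<nu>)) {X \<in> space (PiM {..<n} (\<lambda>_. \<nu>)). \<forall>j\<in>{..<n}. X j \<notin> A}
       \<le> exp (- (real n * q))"
proof -
  interpret prob_space \<nu> by fact
  have "{X \<in> space (PiM {..<n} (\<lambda>_. \<nu>)). \<forall>j\<in>{..<n}. X j \<notin> A} =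
      {X \<in> space (PiM {..<n} (\<lambda>_. \<nu>)). \<forall>j\<in>{..<n}. X j \<in> space \<nu> - A}"
    by (auto simp: space_PiM)
  then have "measure (PiM {..<n} (\<lambda>_. \<nu>)) {X \<in> space (PiM {..<n} (\<lambda>_. \<nu>)). \<forall>j\<in>{..<n}. X j \<notin> A}
      = (1 - measure \<nu> A) ^ n"
    using measure_PiM_iid_Collect[OF assms(1), of "{..<n}" "{..<n}" "\<lambda>_. space \<nu> - A"] assms(2)
    by (simp add: prob_compl)
  also have "\<dots> \<le> (exp (- q)) ^ n"
    using assms(3) prob_le_1[of A] exp_ge_add_one_self[of "- q"] by (intro power_mono) auto
  also have "\<dots> = exp (- (real n * q))"
    by (simp add: exp_of_nat_mult[symmetric])
  finally show ?thesis .
qed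

lemma vr_contractible_if_net_hit:
  fixes X :: "nat \<Rightarrow> 'a::real_inner"
  assumes "convex K" "\<And>j. j < n \<Longrightarrow> X j \<in> K" "0 < r" "15 * \<rho> \<le> r"
    and net: "\<forall>z\<in>K. \<exists>y\<in>Y. dist z y < 2 * \<rho>" and hit: "\<forall>y\<in>Y. \<exists>j<n. dist y (X j) < \<rho>"
  shows "vr_contractible n r X"
proof (rule vr_contractible_if_dense_in_convex[OF assms(1) _ assms(3)])
  show "\<forall>z\<in>K. \<exists>j<n. dist z (X j) < r/5"
  proof
    fix z assume "z \<in> K"
    then obtain y where "y \<in> Y" "dist z y < 2 * \<rho>" using net by blast
    moreover from this obtain j where "j < n" "dist y (X j) < \<rho>" using hit by blast
    ultimately show "\<exists>j<n. dist z (X j) < r/5"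
      using dist_triangle[of z "X j" y] \<open>15 * \<rho> \<le> r\<close> by (intro exI[of _ j]) auto
  qed
qed (rule assms(2))

lemma vr_contractible_prob_lower_bound:
  fixes \<nu> :: "'a::{real_inner, second_countable_topology} measure" and n :: nat
  assumes \<nu>: "prob_space \<nu>" "sets \<nu> = sets borel"
    and K: "convex K" "K \<in> sets \<nu>" "measure \<nu> K = 1"
    and "0 < q" "15 * \<rho> \<le> r" "0 < r" and mass: "\<And>y. y \<in> K \<Longrightarrow> q \<le> measure \<nu> (ball y \<rho>)"
  defines "P \<equiv> PiM {..<n} (\<lambda>_. \<nu>)"
  shows "1 - exp (- (real n * q)) / q \<le> measure P {X \<in> space P. vr_contractible n r X}"
proof -
  interpret P: prob_space P unfolding P_def by (intro prob_space_PiM \<nu>(1))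
  obtain Y where Y: "finite Y" "Y \<subseteq> K" "real (card Y) * q \<le> 1"
    and net: "\<And>z. z \<in> K \<Longrightarrow> \<exists>y\<in>Y. dist z y < 2 * \<rho>"
    using finite_net_from_ball_mass[OF \<nu> \<open>0 < q\<close> mass] by blast
  define inK where "inK = {X \<in> space P. \<forall>j\<in>{..<n}. X j \<in> K}"
  define miss where "miss = (\<Union>y\<in>Y. {X \<in> space P. \<forall>j\<in>{..<n}. X j \<notin> ball y \<rho>})"
  have [measurable]: "(\<lambda>X. X i) \<in> borel_measurable P" for i
    unfolding P_def by (rule borel_measurable_PiM_component[OF \<nu>(2)])
  have [measurable]: "K \<in> sets borel" "ball y \<rho> \<in> sets borel" for y
    using K(2) \<nu>(2) by auto
  have sets: "inK \<in> sets P" "{X \<in> space P. \<forall>j\<in>{..<n}. X j \<notin> ball y \<rho>} \<in> sets P" for y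
    unfolding inK_def by measurable
  then have "miss \<in> sets P" using Y(1) by (auto simp: miss_def)
  have "measure P inK = 1"
    using measure_PiM_iid_Collect[OF \<nu>(1), of "{..<n}" "{..<n}" "\<lambda>_. K"] K
    by (simp add: inK_def P_def)
  moreover have "measure P miss \<le> exp (- (real n * q)) / q"
  proof -
    have "measure P miss \<le> (\<Sum>y\<in>Y. measure P {X \<in> space P. \<forall>j\<in>{..<n}. X j \<notin> ball y \<rho>})"
      unfolding miss_def using sets Y(1) by (intro P.finite_measure_subadditive_finite) auto
    also have "\<dots> \<le> (\<Sum>y\<in>Y. exp (- (real n * q)))"
      using Y(2) \<nu>(2) mass unfolding P_def
      by (intro sum_mono measure_PiM_iid_avoid_le_exp[OF \<nu>(1)]) auto
    also have "\<dots> \<le> exp (- (real n * q)) / q"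
      using Y(3) \<open>0 < q\<close> by (simp add: field_simps)
    finally show ?thesis .
  qed
  moreover have "inK - miss \<subseteq> {X \<in> space P. vr_contractible n r X}"
  proof
    fix X assume X: "X \<in> inK - miss"
    then have "vr_contractible n r X"
      using net by (intro vr_contractible_if_net_hit[OF K(1) _ \<open>0 < r\<close> \<open>15 * \<rho> \<le> r\<close>])
        (auto simp: inK_def miss_def)
    then show "X \<in> {X \<in> space P. vr_contractible n r X}" using X by (simp add: inK_def)
  qed
  then have "measure P (inK - miss) \<le> measure P {X \<in> space P. vr_contractible n r X}"
    using sets_vr_contractible_event[OF \<nu>(2)] by (intro P.finite_measure_mono) (simp_all add: P_def)
  moreover have "measure P (inK - miss) = measure P inK - measure P (inK \<inter> miss)"
    using sets(1) \<open>miss \<in> sets P\<close> by (rule P.finite_measure_Diff')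
  moreover have "measure P (inK \<inter> miss) \<le> measure P miss"
    using \<open>miss \<in> sets P\<close> by (intro P.finite_measure_mono) auto
  ultimately show ?thesis by linarith
qed

lemma mult_le_power_if_mult_root_le:
  fixes c L s :: real
  assumes "1 \<le> c" "0 < L" "0 < d" "c * L powr (1 / real d) \<le> s"
  shows "c * L \<le> s ^ d"
proof -
  have "c * L \<le> c ^ d * L"
    using assms(1-3) by (intro mult_right_mono self_le_power) auto
  also have "\<dots> = (c * L powr (1 / real d)) ^ d"
    using assms(2,3) by (simp add: power_mult_distrib powr_realpow[symmetric] powr_powr)
  also have "\<dots> \<le> s ^ d"
    using assms(1,2,4) by (intro power_mono) auto
  finally show ?thesis .
qed

lemma vr_contractible_prob_lower_bound_at_threshold:
  fixes \<nu> :: "'a::euclidean_space measure" and n :: nat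
  assumes \<nu>: "prob_space \<nu>" "sets \<nu> = sets borel"
    and K: "convex K" "K \<in> sets \<nu>" "measure \<nu> K = 1"
    and "0 < \<kappa>" "0 < \<rho>0"
    and mass: "\<And>y \<rho>. y \<in> K \<Longrightarrow> 0 < \<rho> \<Longrightarrow> \<rho> \<le> \<rho>0 \<Longrightarrow> \<kappa> * \<rho> ^ DIM('a) \<le> measure \<nu> (ball y \<rho>)"
    and "2 \<le> n" and r: "15 * max 1 (2/\<kappa>) * (ln (real n) / real n) powr (1 / real DIM('a)) \<le> r"
  defines "q \<equiv> min (2 * ln (real n) / real n) (\<kappa> * \<rho>0 ^ DIM('a))"
  shows "1 - exp (- (real n * q)) / q
           \<le> measure (PiM {..<n} (\<lambda>_. \<nu>)) {X \<in> space (PiM {..<n} (\<lambda>_. \<nu>)). vr_contractible n r X}"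
proof -
  define L where "L = ln (real n) / real n"
  have "0 < L" using \<open>2 \<le> n\<close> by (simp add: L_def)
  then have "0 < 15 * max 1 (2/\<kappa>) * L powr (1 / real DIM('a))" by simp
  then have "0 < r" using r by (simp add: L_def)
  define \<rho> where "\<rho> = min (r / 15) \<rho>0"
  have \<rho>: "0 < \<rho>" "\<rho> \<le> \<rho>0" "15 * \<rho> \<le> r"
    using \<open>0 < r\<close> \<open>0 < \<rho>0\<close> by (auto simp: \<rho>_def)
  have "2 * L = \<kappa> * (2/\<kappa> * L)" using \<open>0 < \<kappa>\<close> by simp
  also have "\<dots> \<le> \<kappa> * (max 1 (2/\<kappa>) * L)"
    using \<open>0 < \<kappa>\<close> \<open>0 < L\<close> by (intro mult_left_mono mult_right_mono) auto
  also have "\<dots> \<le> \<kappa> * (r / 15) ^ DIM('a)"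
    using r \<open>0 < L\<close> \<open>0 < \<kappa>\<close>
    by (intro mult_left_mono mult_le_power_if_mult_root_le) (auto simp: L_def)
  finally have "q \<le> \<kappa> * \<rho> ^ DIM('a)"
    by (cases "r / 15 \<le> \<rho>0") (auto simp: q_def L_def \<rho>_def min_def)
  moreover have "0 < q" using \<open>2 \<le> n\<close> \<open>0 < \<kappa>\<close> \<open>0 < \<rho>0\<close> by (simp add: q_def)
  ultimately show ?thesis
    by (intro vr_contractible_prob_lower_bound[OF \<nu> K _ \<rho>(3) \<open>0 < r\<close>] order_trans[OF _ mass])
       (use \<rho> in auto)
qed

lemma vr_contractible_tendsto_1:
  fixes \<nu> :: "'a::euclidean_space measure" and r :: "nat \<Rightarrow> real"
  assumes \<nu>: "prob_space \<nu>" "sets \<nu> = sets borel"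
    and K: "convex K" "K \<in> sets \<nu>" "measure \<nu> K = 1"
    and "0 < \<kappa>" "0 < \<rho>0"
    and mass: "\<And>y \<rho>. y \<in> K \<Longrightarrow> 0 < \<rho> \<Longrightarrow> \<rho> \<le> \<rho>0 \<Longrightarrow> \<kappa> * \<rho> ^ DIM('a) \<le> measure \<nu> (ball y \<rho>)"
    and r: "\<And>n. 15 * max 1 (2/\<kappa>) * (ln (real n) / real n) powr (1 / real DIM('a)) \<le> r n"
  shows "(\<lambda>n. measure (PiM {..<n} (\<lambda>_. \<nu>)) {X \<in> space (PiM {..<n} (\<lambda>_. \<nu>)). vr_contractible n (r n) X})
           \<longlonglongrightarrow> 1"
proof -
  define A where "A n = measure (PiM {..<n} (\<lambda>_. \<nu>)) {X \<in> space (PiM {..<n} (\<lambda>_. \<nu>)). vr_contractible n (r n) X}"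
    for n
  define q where "q n = min (2 * ln (real n) / real n) (\<kappa> * \<rho>0 ^ DIM('a))" for n :: nat
  have "(\<lambda>n. 2 * ln (real n) / real n) \<longlonglongrightarrow> 0" by real_asymp
  then have "eventually (\<lambda>n. 2 * ln (real n) / real n < \<kappa> * \<rho>0 ^ DIM('a)) sequentially"
    using \<open>0 < \<kappa>\<close> \<open>0 < \<rho>0\<close> by (intro order_tendstoD(2)) auto
  then have "eventually (\<lambda>n. exp (- (real n * q n)) / q n =
      exp (- (real n * (2 * ln (real n) / real n))) / (2 * ln (real n) / real n)) sequentially"
    by eventually_elim (simp add: q_def)
  moreover have "(\<lambda>n. exp (- (real n * (2 * ln (real n) / real n))) / (2 * ln (real n) / real n))
      \<longlonglongrightarrow> 0"
    by real_asymp
  ultimately have "(\<lambda>n. exp (- (real n * q n)) / q n) \<longlonglongrightarrow> 0"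
    by (simp only: tendsto_cong)
  then have bound_tendsto_1: "(\<lambda>n. 1 - exp (- (real n * q n)) / q n) \<longlonglongrightarrow> 1"
    using tendsto_diff[OF tendsto_const, of _ 0 sequentially 1] by simp
  show ?thesis
    unfolding A_def[symmetric]
  proof (rule tendsto_sandwich[OF _ _ bound_tendsto_1 tendsto_const])
    show "eventually (\<lambda>n. 1 - exp (- (real n * q n)) / q n \<le> A n) sequentially"
      using eventually_ge_at_top[of 2] unfolding A_def q_def
      by eventually_elim (rule vr_contractible_prob_lower_bound_at_threshold[OF assms(1-8) _ r])
    have "A n \<le> 1" for n
      using prob_space.prob_le_1[OF prob_space_PiM[OF \<nu>(1)]] by (simp add: A_def)
    then show "eventually (\<lambda>n. A n \<le> 1) sequentially" by simp
  qed
qed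

theorem theorem1p1:
  fixes K :: "'a::euclidean_space set"
    and \<nu> :: "'a measure"
    and f :: "'a \<Rightarrow> real"
  assumes "convex_body K"
    and "f \<in> borel_measurable borel"
    and "\<And>x. 0 \<le> f x"
    and "\<And>x. x \<notin> K \<Longrightarrow> f x = 0"
    and "\<exists>\<delta>>0. \<forall>x\<in>K. \<delta> \<le> f x"
    and "\<nu> = density lborel (\<lambda>x. ennreal (f x))"
    and "prob_space \<nu>"
  shows "\<exists>c>0. \<forall>r :: nat \<Rightarrow> real.
           (\<forall>n. c * (ln (real n) / real n) powr (1 / real DIM('a)) \<le> r n) \<longrightarrow>
           (\<lambda>n. measure (PiM {..<n} (\<lambda>_. \<nu>)) {X \<in> space (PiM {..<n} (\<lambda>_. \<nu>)). vr_contractible n (r n) X})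
             \<longlonglongrightarrow> 1"
proof -
  obtain \<delta> where "0 < \<delta>" "\<And>x. x \<in> K \<Longrightarrow> \<delta> \<le> f x" using assms(5) by blast
  then obtain \<kappa> \<rho>0 where "0 < \<kappa>" "0 < \<rho>0"
    and mass: "\<And>y \<rho>. y \<in> K \<Longrightarrow> 0 < \<rho> \<Longrightarrow> \<rho> \<le> \<rho>0 \<Longrightarrow> \<kappa> * \<rho> ^ DIM('a) \<le> measure \<nu> (ball y \<rho>)"
    using density_ball_measure_lower_bound[OF assms(1,2) _ _ assms(6,7)] by metis
  have sets: "sets \<nu> = sets borel" using assms(6) by simp
  have "convex K" and K_borel: "K \<in> sets borel"
    using assms(1) by (auto simp: convex_body_def compact_imp_closed)
  moreover have "measure \<nu> K = 1"
    by (rule measure_density_support_eq_1[of f K \<nu>, OF assms(2,4) K_borel assms(6,7)])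
  ultimately show ?thesis
    using vr_contractible_tendsto_1[OF assms(7) sets _ _ _ \<open>0 < \<kappa>\<close> \<open>0 < \<rho>0\<close> mass] sets
    by (intro exI[of _ "15 * max 1 (2/\<kappa>)"]) auto
qed

end
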